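(* Let $n$ be an odd squarefree positive integer. If $n\equiv 5$ or $7\pmod 8$, then $c_1(n)=0$. If $n\equiv 3\pmod 4$, then $c_2(n)=0$.
   Context: Define the formal power series $g(T)=T\prod_{k=1}^{\infty}(1-T^{8k})(1-T^{16k})\in\mathbb{Z}[[T]]$ and, for $j=1,2$, $\theta_j(T)=1+2\sum_{k=1}^{\infty}T^{2jk^2}$. For $j=1,2$ and an integer $n>0$, $c_j(n)$ denotes the coefficient of $T^n$ in the formal power series $g(T)\theta_j(T)$. *)

theory Defs
  imports "HOL-Computational_Algebra.Formal_Power_Series" "HOL-Computational_Algebra.Squarefree"
begin

definition g_partial :: "nat \<Rightarrow> int fps" where
  "g_partial N = fps_X * (\<Prod>k\<in>{1..N}. (1 - fps_X ^ (8*k)) * (1 - fps_X ^ (16*k)))"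

text \<open>The formal infinite product: its n-th coefficient is that of any partial product
  with N >= n (the factors with k > n do not affect coefficients of T^m, m <= n).\<close>
definition g :: "int fps" where
  "g = Abs_fps (\<lambda>n. fps_nth (g_partial n) n)"

definition theta :: "nat \<Rightarrow> int fps" where
  "theta j = Abs_fps (\<lambda>m. if m = 0 then 1
                           else if (\<exists>k::nat. k \<ge> 1 \<and> m = 2*j*k^2) then 2 else 0)"

definition c :: "nat \<Rightarrow> nat \<Rightarrow> int" where
  "c j n = fps_nth (g * theta j) n"

end

theory Submission
  imports Defs
begin

(* The vanishing of c_1(n) and c_2(n) is forced by congruences alone.
   Every factor 1 - T^(8k), 1 - T^(16k) of g(T)/T only involves exponents divisible
   by 8, so g(T) has nonzero coefficients only at exponents m = 1 (mod 8); and
   theta_j(T) has nonzero coefficients only at exponents 2 j k^2.  Hence c_j(n) can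
   be nonzero only if n = i + 2 j k^2 with i = 1 (mod 8).  Since squares are 0 or 1
   (mod 4), 2 k^2 is 0 or 2 (mod 8) and 4 k^2 is 0 (mod 4), so such a representation
   is impossible when n = 5, 7 (mod 8) for j = 1, and when n = 3 (mod 4) for j = 2. *)

definition supported_mod :: "nat \<Rightarrow> 'a::zero fps \<Rightarrow> bool" where
  "supported_mod d f \<longleftrightarrow> (\<forall>m. fps_nth f m \<noteq> 0 \<longrightarrow> d dvd m)"

text \<open>Such series form a multiplicative monoid: a nonzero term of the Cauchy product
  at exponent \<open>m\<close> needs exponents \<open>i\<close> and \<open>m - i\<close> that are both multiples of \<open>d\<close>.\<close>
lemma supported_mod_mult:
  fixes f h :: "'a::semiring_0 fps"
  assumes f: "supported_mod d f" and h: "supported_mod d h"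
  shows "supported_mod d (f * h)"
  unfolding supported_mod_def
proof (intro allI impI)
  fix m assume "fps_nth (f * h) m \<noteq> 0"
  then obtain i where i: "i \<le> m" and "fps_nth f i * fps_nth h (m - i) \<noteq> 0"
    by (auto simp: fps_mult_nth elim: sum.not_neutral_contains_not_neutral)
  then have "fps_nth f i \<noteq> 0" and "fps_nth h (m - i) \<noteq> 0" by auto
  then have "d dvd i" and "d dvd m - i"
    using f h unfolding supported_mod_def by blast+
  then have "d dvd i + (m - i)" by (rule dvd_add)
  then show "d dvd m" using i by simp
qed

lemma supported_mod_one: "supported_mod d (1 :: 'a::{zero,one} fps)"
  unfolding supported_mod_def by simp

lemma supported_mod_X_power:
  "d dvd k \<Longrightarrow> supported_mod d (fps_X ^ k :: 'a::comm_ring_1 fps)"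
  unfolding supported_mod_def by (auto simp: fps_X_power_iff)

lemma supported_mod_diff:
  "supported_mod d f \<Longrightarrow> supported_mod d h \<Longrightarrow> supported_mod d (f - h :: 'a::ab_group_add fps)"
  unfolding supported_mod_def by (metis diff_self fps_sub_nth)

lemma supported_mod_prod:
  fixes F :: "'b \<Rightarrow> 'a::comm_semiring_1 fps"
  assumes "\<And>k. k \<in> K \<Longrightarrow> supported_mod d (F k)"
  shows "supported_mod d (\<Prod>k\<in>K. F k)"
  using assms
proof (induction K rule: infinite_finite_induct)
  case (insert k K)
  then show ?case by (simp add: supported_mod_mult)
qed (simp_all add: supported_mod_one)

lemma g_factors_supported_mod_8:
  "supported_mod 8 (\<Prod>k\<in>{1..N}. (1 - fps_X ^ (8*k)) * (1 - fps_X ^ (16*k)) :: int fps)"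
proof (rule supported_mod_prod)
  fix k :: nat
  have "(8::nat) dvd 16 * k" by (simp add: dvd_mult2[of 8 16])
  then show "supported_mod 8 ((1 - fps_X ^ (8*k)) * (1 - fps_X ^ (16*k)) :: int fps)"
    by (intro supported_mod_mult supported_mod_diff supported_mod_one supported_mod_X_power) auto
qed

lemma g_coeff_nonzero_mod_8:
  assumes "fps_nth g m \<noteq> 0"
  shows "m mod 8 = 1"
proof -
  let ?P = "\<Prod>k\<in>{1..m}. (1 - fps_X ^ (8*k)) * (1 - fps_X ^ (16*k)) :: int fps"
  have "fps_nth (fps_X * ?P) m \<noteq> 0"
    using assms by (simp add: g_def g_partial_def)
  then have "m \<noteq> 0" and "fps_nth ?P (m - 1) \<noteq> 0"
    by (auto simp: fps_X_mult_nth split: if_splits)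
  then have "m \<noteq> 0" and "8 dvd m - 1"
    using g_factors_supported_mod_8[of m] unfolding supported_mod_def by auto
  then show ?thesis by presburger
qed

lemma theta_coeff_nonzero:
  assumes "fps_nth (theta j) m \<noteq> 0"
  obtains k :: nat where "m = 2 * j * k^2"
  using assms by (auto simp: theta_def split: if_splits)

lemma c_eq_0_if_no_representation:
  assumes no_rep: "\<And>i k. i mod 8 = 1 \<Longrightarrow> n = i + 2 * j * k^2 \<Longrightarrow> False"
  shows "c j n = 0"
proof -
  have "fps_nth g i * fps_nth (theta j) (n - i) = 0" if "i \<le> n" for i
  proof (rule ccontr)
    assume "fps_nth g i * fps_nth (theta j) (n - i) \<noteq> 0"
    then have "fps_nth g i \<noteq> 0" and "fps_nth (theta j) (n - i) \<noteq> 0" by auto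
    from \<open>fps_nth g i \<noteq> 0\<close> have "i mod 8 = 1" by (rule g_coeff_nonzero_mod_8)
    from \<open>fps_nth (theta j) (n - i) \<noteq> 0\<close> obtain k where "n - i = 2 * j * k^2"
      by (rule theta_coeff_nonzero)
    with \<open>i \<le> n\<close> have "n = i + 2 * j * k^2" by simp
    with \<open>i mod 8 = 1\<close> show False by (rule no_rep)
  qed
  then show ?thesis unfolding c_def fps_mult_nth by (intro sum.neutral) auto
qed

lemma square_mod_4: "(k::nat)^2 mod 4 = 0 \<or> k^2 mod 4 = 1"
proof -
  have "k^2 mod 4 = (k mod 4)^2 mod 4" by (simp add: power_mod)
  moreover have "k mod 4 \<in> {0, 1, 2, 3}" by auto
  ultimately show ?thesis by (auto simp: power2_eq_square)
qed

theorem mainTheorem10: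
  fixes n :: nat
  assumes "n > 0" and "odd n" and "squarefree n"
  shows "(n mod 8 = 5 \<or> n mod 8 = 7 \<longrightarrow> c 1 n = 0) \<and> (n mod 4 = 3 \<longrightarrow> c 2 n = 0)"
proof (intro conjI impI)
  assume n_mod_8: "n mod 8 = 5 \<or> n mod 8 = 7"
  show "c 1 n = 0"
  proof (rule c_eq_0_if_no_representation)
    fix i k :: nat assume i: "i mod 8 = 1" and "n = i + 2 * 1 * k^2"
    define s where "s = k^2"
    have "n = i + 2 * s" and "s mod 4 = 0 \<or> s mod 4 = 1"
      using \<open>n = i + 2 * 1 * k^2\<close> square_mod_4[of k] by (simp_all add: s_def)
    then show False using i n_mod_8 by presburger
  qed
next
  assume n_mod_4: "n mod 4 = 3"
  show "c 2 n = 0"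
  proof (rule c_eq_0_if_no_representation)
    fix i k :: nat assume i: "i mod 8 = 1" and "n = i + 2 * 2 * k^2"
    then have "n = i + 4 * k^2" by simp
    then show False using i n_mod_4 by presburger
  qed
qed

end
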